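(* For every $n\geq 1$, \[\deg(\mathrm{nib}:S_n\to S_n)=\frac{(n-1)(n-2)^2+n^2}{n!}+\sum_{k=1}^{n-2}\frac{k(k^3-k+1)}{(k+2)!}.\] Furthermore, \[\lim_{n\to\infty}\deg(\mathrm{nib}:S_n\to S_n)=4e-9.\]
   Context: For finite sets $X,Y$ and $f:X\to Y$, $\deg(f)=\frac{1}{|X|}\sum_{y\in Y}|f^{-1}(y)|^2$. $S_n$ is the set of permutations $\pi=\pi_1\cdots\pi_n$ of $\{1,\dots,n\}$. A descent of $\pi$ is an index $i\in\{1,\dots,n-1\}$ with $\pi_i>\pi_{i+1}$. The nibble sort map $\mathrm{nib}:S_n\to S_n$ fixes the identity $12\cdots n$, and for $\pi\neq 12\cdots n$ with smallest descent $i$, $\mathrm{nib}(\pi)$ is obtained from $\pi$ by swapping $\pi_i$ and $\pi_{i+1}$. *)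

theory Defs
  imports "HOL-Analysis.Analysis" "HOL-Combinatorics.Multiset_Permutations"
begin

definition map_deg :: "('a \<Rightarrow> 'b) \<Rightarrow> 'a set \<Rightarrow> 'b set \<Rightarrow> real" where
  "map_deg f X Y = (\<Sum>y\<in>Y. real (card {x\<in>X. f x = y}) ^ 2) / real (card X)"

definition Sym :: "nat \<Rightarrow> nat list set" where
  "Sym n = permutations_of_set {1..n}"

text \<open>Descent at (1-based) index i: 1 \<le> i \<le> n-1 and pi_i > pi_(i+1).
  With 0-based list indexing, pi_i = xs ! (i-1).\<close>
definition is_descent :: "nat list \<Rightarrow> nat \<Rightarrow> bool" where
  "is_descent xs i \<longleftrightarrow> 1 \<le> i \<and> i < length xs \<and> xs ! (i - 1) > xs ! i"

definition nib :: "nat list \<Rightarrow> nat list" where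
  "nib xs = (if \<exists>i. is_descent xs i then
     (let i = (LEAST i. is_descent xs i) in xs[i - 1 := xs ! i, i := xs ! (i - 1)])
   else xs)"

end

theory Submission
  imports Defs
begin

(* Let S(A) be the sum of the squared nib-fibre sizes over the permutations of a finite set A, so
   that deg(nib) = S({1..n}) / n!. Writing a permutation of A as a permutation of A - {x} followed
   by x, appending x changes the fibre size only for the increasing arrangement of A - {x} and for
   the arrangements that increase up to a final descent. This gives
   S(A) = sum_x S(A - {x}) + 6 - 2|A|, hence S(A) / |A|! = 6 e_(n+1) - 2 e_n - 9 for n = |A| and
   e_m = sum_(i<m) 1/i!. The closed form satisfies the same recursion, and e_m tends to e. *)

lemma is_descent_Cons_Suc:
  "is_descent (x # xs) (Suc i) \<longleftrightarrow> (if i = 0 then xs \<noteq> [] \<and> hd xs < x else is_descent xs i)"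
  by (cases xs; cases i) (auto simp: is_descent_def hd_conv_nth)

lemma nib_Cons_Cons_descent:
  assumes "y < x" shows "nib (x # y # t) = y # x # t"
proof -
  have "(LEAST i. is_descent (x # y # t) i) = 1"
    by (rule Least_equality) (use assms in \<open>auto simp: is_descent_def\<close>)
  moreover have "is_descent (x # y # t) 1" using assms by (simp add: is_descent_def)
  ultimately show ?thesis by (auto simp: nib_def)
qed

lemma nib_Cons_no_descent:
  assumes "\<not> (xs \<noteq> [] \<and> hd xs < x)" shows "nib (x # xs) = x # nib xs"
proof -
  have not0: "\<not> is_descent ys 0" for ys :: "nat list" by (simp add: is_descent_def)
  have shift: "is_descent (x # xs) (Suc i) \<longleftrightarrow> is_descent xs i" for i
    using assms not0 by (simp add: is_descent_Cons_Suc)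
  show ?thesis
  proof (cases "\<exists>i. is_descent xs i")
    case True
    define j where "j = (LEAST i. is_descent xs i)"
    have "is_descent xs j" unfolding j_def using True by (rule LeastI_ex)
    then obtain j' where j': "j = Suc j'" using not0 by (cases j) auto
    have "(LEAST i. is_descent (x # xs) i) = Suc j"
      unfolding j_def shift[symmetric] using True shift not0 by (metis Least_Suc)
    moreover have "\<exists>i. is_descent (x # xs) i" using True shift by blast
    ultimately show ?thesis using True j' by (simp add: nib_def j_def[symmetric])
  next
    case False
    then have "\<not> is_descent (x # xs) i" for i using shift not0 by (cases i) auto
    then show ?thesis using False by (simp add: nib_def)
  qed
qed

lemma nib_Nil [simp]: "nib [] = []" and nib_singleton [simp]: "nib [x] = [x]"
  by (simp_all add: nib_def is_descent_def)

lemma nib_Cons_Cons [simp]: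
  "nib (x # y # t) = (if y < x then y # x # t else x # nib (y # t))"
  by (simp add: nib_Cons_Cons_descent nib_Cons_no_descent)

lemma length_nib [simp]: "length (nib xs) = length xs"
  and set_nib [simp]: "set (nib xs) = set xs"
  and distinct_nib [simp]: "distinct (nib xs) = distinct xs"
  by (induction xs rule: induct_list012) auto

(* If sigma_1 < ... < sigma_r > sigma_(r+1), the nib-preimages of sigma are the r - 1 permutations
   obtained by swapping two adjacent entries of the initial run, and the one obtained by swapping
   sigma_(r+1) and sigma_(r+2) if sigma_r < sigma_(r+2). *)
fun nib_fiber_size :: "'a::linorder list \<Rightarrow> nat" where
  "nib_fiber_size [] = 1"
| "nib_fiber_size [x] = 1"
| "nib_fiber_size (x # y # t) =
     (if x < y then nib_fiber_size (y # t) + 1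
      else (case t of [] \<Rightarrow> 0 | z # _ \<Rightarrow> if x < z then 1 else 0))"

lemma finite_nib_fiber: "finite {\<pi>. nib \<pi> = \<sigma>}"
proof (rule finite_subset)
  show "{\<pi>. nib \<pi> = \<sigma>} \<subseteq> {xs. set xs \<subseteq> set \<sigma> \<and> length xs = length \<sigma>}" by auto
qed (simp add: finite_lists_length_eq)

lemma nib_fiber_Nil: "{\<pi>. nib \<pi> = []} = {[]}"
  by (auto dest: arg_cong[where f = length])

lemma nib_fiber_singleton: "{\<pi>. nib \<pi> = [x]} = {[x]}"
proof -
  have "\<pi> = [x]" if "nib \<pi> = [x]" for \<pi>
    using that by (cases \<pi> rule: nib_fiber_size.cases) (auto split: if_splits dest: arg_cong[where f = length])
  then show ?thesis by auto
qed

lemma hd_nib_le: "nib (b # r) = y # t \<Longrightarrow> y \<le> b"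
  by (cases r) (auto split: if_splits)

lemma nib_fiber_ascent:
  assumes "x < y"
  shows "{\<pi>. nib \<pi> = x # y # t} = Cons x ` {\<pi>. nib \<pi> = y # t} \<union> {y # x # t}"
proof (intro equalityI subsetI)
  fix \<pi> assume "\<pi> \<in> {\<pi>. nib \<pi> = x # y # t}"
  then have h: "nib \<pi> = x # y # t" by simp
  then obtain a b r where "\<pi> = a # b # r"
    by (cases \<pi> rule: nib_fiber_size.cases) auto
  with h assms show "\<pi> \<in> Cons x ` {\<pi>. nib \<pi> = y # t} \<union> {y # x # t}"
    by (auto split: if_splits)
next
  fix \<pi> assume "\<pi> \<in> Cons x ` {\<pi>. nib \<pi> = y # t} \<union> {y # x # t}"
  then consider "\<pi> = y # x # t" | p where "\<pi> = x # p" "nib p = y # t" by blast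
  then show "\<pi> \<in> {\<pi>. nib \<pi> = x # y # t}"
  proof cases
    case 2
    then obtain b r where "p = b # r" by (cases p) auto
    then show ?thesis using 2 assms hd_nib_le[of b r y t] by simp
  qed (use assms in simp)
qed

lemma nib_fiber_descent:
  assumes "y < x" "distinct (x # y # t)"
  shows "{\<pi>. nib \<pi> = x # y # t} =
    (case t of [] \<Rightarrow> {} | z # t' \<Rightarrow> if x < z then {x # z # y # t'} else {})"
proof (intro equalityI subsetI)
  fix \<pi> assume "\<pi> \<in> {\<pi>. nib \<pi> = x # y # t}"
  then have h: "nib \<pi> = x # y # t" by simp
  then obtain a b r where \<pi>: "\<pi> = a # b # r"
    by (cases \<pi> rule: nib_fiber_size.cases) auto
  have "\<not> b < a" using h assms(1) \<pi> by auto
  then have a: "a = x" and nib_br: "nib (b # r) = y # t" using h \<pi> by simp_all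
  obtain q r' where r: "r = q # r'" using nib_br \<open>\<not> b < a\<close> a assms(1) by (cases r) auto
  have "q < b" using nib_br \<open>\<not> b < a\<close> a assms(1) r by (auto split: if_splits)
  then have "y = q" "t = b # r'" using nib_br r by simp_all
  with \<open>\<not> b < a\<close> a assms(2) have "x < b" by auto
  then show "\<pi> \<in> (case t of [] \<Rightarrow> {} | z # t' \<Rightarrow> if x < z then {x # z # y # t'} else {})"
    using \<pi> a r \<open>y = q\<close> \<open>t = b # r'\<close> by simp
next
  fix \<pi> assume "\<pi> \<in> (case t of [] \<Rightarrow> {} | z # t' \<Rightarrow> if x < z then {x # z # y # t'} else {})"
  then show "\<pi> \<in> {\<pi>. nib \<pi> = x # y # t}" using assms by (auto split: list.splits if_splits)
qed

theorem card_nib_fiber: "distinct \<sigma> \<Longrightarrow> card {\<pi>. nib \<pi> = \<sigma>} = nib_fiber_size \<sigma>"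
proof (induction \<sigma> rule: nib_fiber_size.induct)
  case (3 x y t)
  show ?case
  proof (cases "x < y")
    case True
    have "card {\<pi>. nib \<pi> = x # y # t} = card (Cons x ` {\<pi>. nib \<pi> = y # t}) + 1"
      unfolding nib_fiber_ascent[OF True] using True finite_nib_fiber
      by (subst card_Un_disjoint) auto
    with 3 True show ?thesis by (simp add: card_image)
  next
    case False
    with "3.prems" have "y < x" by (cases "x = y") auto
    with False show ?thesis unfolding nib_fiber_descent[OF \<open>y < x\<close> "3.prems"]
      by (auto split: list.splits)
  qed
qed (simp_all add: nib_fiber_Nil nib_fiber_singleton)

lemma sorted_wrt_less_Cons_Cons:
  "sorted_wrt (<) (p # q # t) \<longleftrightarrow> (p::'a::linorder) < q \<and> sorted_wrt (<) (q # t)"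
  by (rule sorted_wrt2) (auto simp: transp_def)

lemma nib_fiber_size_Cons_ascent:
  "xs \<noteq> [] \<Longrightarrow> x < hd xs \<Longrightarrow> nib_fiber_size (x # xs) = nib_fiber_size xs + 1"
  by (cases xs) auto

lemma nib_fiber_size_sorted:
  "sorted_wrt (<) \<tau> \<Longrightarrow> \<tau> \<noteq> [] \<Longrightarrow> nib_fiber_size \<tau> = length \<tau>"
  by (induction \<tau> rule: nib_fiber_size.induct) (auto simp: sorted_wrt_less_Cons_Cons)

lemma nib_fiber_size_sorted_snoc:
  "sorted_wrt (<) \<tau> \<Longrightarrow> \<tau> \<noteq> [] \<Longrightarrow> distinct (\<tau> @ [x]) \<Longrightarrow>
   nib_fiber_size (\<tau> @ [x]) = (if last \<tau> < x then length \<tau> + 1 else length \<tau> - 1)"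
  by (induction \<tau> rule: nib_fiber_size.induct) (auto simp: sorted_wrt_less_Cons_Cons)

lemma nib_fiber_size_sorted_swap_last:
  "sorted_wrt (<) (\<rho> @ [a]) \<Longrightarrow> b < a \<Longrightarrow>
    nib_fiber_size (\<rho> @ [a, b]) = length \<rho> \<and>
    nib_fiber_size (\<rho> @ [a, b, x]) = length \<rho> + (if a < x then 1 else 0)"
proof (induction \<rho>)
  case (Cons p \<rho>)
  have "sorted_wrt (<) (\<rho> @ [a])" using Cons.prems(1) by simp
  moreover have "p < hd (\<rho> @ [a, b])" "p < hd (\<rho> @ [a, b, x])"
    using Cons.prems(1) by (cases \<rho>; simp)+
  ultimately show ?case
    using Cons.IH Cons.prems(2) by (simp add: nib_fiber_size_Cons_ascent)
qed simp

lemma nib_fiber_size_snoc_unchanged: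
  "\<not> sorted_wrt (<) \<tau> \<Longrightarrow> (\<forall>\<rho> a b. \<tau> = \<rho> @ [a, b] \<longrightarrow> \<not> sorted_wrt (<) (\<rho> @ [a])) \<Longrightarrow>
   nib_fiber_size (\<tau> @ [x]) = nib_fiber_size \<tau>"
proof (induction \<tau> rule: nib_fiber_size.induct)
  case (3 p q t)
  show ?case
  proof (cases "p < q")
    case True
    have "\<not> sorted_wrt (<) (q # t)" using "3.prems"(1) True sorted_wrt_less_Cons_Cons by blast
    moreover have "\<not> sorted_wrt (<) (\<rho> @ [a])" if "q # t = \<rho> @ [a, b]" for \<rho> a b
    proof
      assume "sorted_wrt (<) (\<rho> @ [a])"
      moreover have "p < hd (\<rho> @ [a])" using that True by (cases \<rho>) auto
      ultimately have "sorted_wrt (<) ((p # \<rho>) @ [a])"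
        by (cases "\<rho> @ [a]") (auto simp: sorted_wrt_less_Cons_Cons)
      moreover have "p # q # t = (p # \<rho>) @ [a, b]" using that by simp
      ultimately show False using "3.prems"(2) by blast
    qed
    ultimately show ?thesis using "3.IH" True by simp
  next
    case False
    have "t \<noteq> []"
    proof
      assume "t = []"
      then have "p # q # t = [] @ [p, q]" by simp
      then show False using "3.prems"(2) by force
    qed
    then show ?thesis using False by (cases t) auto
  qed
qed auto

lemma last_sorted_list_of_set:
  assumes "finite A" "A \<noteq> {}"
  shows "last (sorted_list_of_set A) = Max A"
proof -
  obtain ys l where s: "sorted_list_of_set A = ys @ [l]"
    using assms by (cases "sorted_list_of_set A" rule: rev_cases) auto
  have "sorted_wrt (<) (ys @ [l])" using s strict_sorted_list_of_set[of A] by simp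
  then have "\<forall>y\<in>set ys. y < l" by (simp add: sorted_wrt_append)
  moreover have "set (ys @ [l]) = A" using s assms(1) by (metis set_sorted_list_of_set)
  ultimately have "Max A = l" using assms(1) by (intro Max_eqI) auto
  then show ?thesis using s by simp
qed

lemma sorted_list_of_set_eq_iff:
  "finite A \<Longrightarrow> sorted_list_of_set A = xs \<longleftrightarrow> sorted_wrt (<) xs \<and> set xs = A"
  by (metis set_sorted_list_of_set strict_sorted_equal strict_sorted_list_of_set)

lemma nib_fiber_size_sorted_list_of_set:
  assumes "finite B" "B \<noteq> {}" "x \<notin> B"
  shows "nib_fiber_size (sorted_list_of_set B) = card B"
    and "nib_fiber_size (sorted_list_of_set B @ [x]) =
           (if Max B < x then card B + 1 else card B - 1)"
proof -
  let ?s = "sorted_list_of_set B"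
  have "sorted_wrt (<) ?s" "?s \<noteq> []" "distinct (?s @ [x])" "length ?s = card B"
    using assms by auto
  then show "nib_fiber_size ?s = card B"
    and "nib_fiber_size (?s @ [x]) = (if Max B < x then card B + 1 else card B - 1)"
    using assms last_sorted_list_of_set[OF assms(1,2)]
    by (simp_all add: nib_fiber_size_sorted nib_fiber_size_sorted_snoc)
qed

definition sorted_with_last :: "'a::linorder set \<Rightarrow> 'a \<Rightarrow> 'a list" where
  "sorted_with_last B b = sorted_list_of_set (B - {b}) @ [b]"

lemma sorted_with_last_permutation:
  "finite B \<Longrightarrow> b \<in> B \<Longrightarrow> sorted_with_last B b \<in> permutations_of_set B"
  by (auto simp: sorted_with_last_def permutations_of_set_def)

lemma nib_fiber_size_sorted_with_last:
  assumes "finite B" "b \<in> B" "b \<noteq> Max B"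
  shows "nib_fiber_size (sorted_with_last B b) = card B - 2"
    and "nib_fiber_size (sorted_with_last B b @ [x]) =
           card B - 2 + (if Max B < x then 1 else 0)"
proof -
  have "Max B \<in> B - {b}" using assms Max_in by blast
  moreover have "Max (B - {b}) = Max B"
    using assms \<open>Max B \<in> B - {b}\<close> by (intro Max_eqI) auto
  ultimately have "last (sorted_list_of_set (B - {b})) = Max B"
    using assms(1) last_sorted_list_of_set[of "B - {b}"] by auto
  moreover have "sorted_list_of_set (B - {b}) \<noteq> []"
    using \<open>Max B \<in> B - {b}\<close> assms(1) by auto
  ultimately obtain \<rho> where \<rho>: "sorted_list_of_set (B - {b}) = \<rho> @ [Max B]"
    by (metis append_butlast_last_id)
  have "sorted_wrt (<) (\<rho> @ [Max B])" by (metis \<rho> strict_sorted_list_of_set)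
  moreover have "b < Max B" using assms by (simp add: order.not_eq_order_implies_strict)
  moreover have "length \<rho> = card B - 2"
    using arg_cong[OF \<rho>, of length] assms(1,2) by simp
  ultimately show "nib_fiber_size (sorted_with_last B b) = card B - 2"
    and "nib_fiber_size (sorted_with_last B b @ [x]) = card B - 2 + (if Max B < x then 1 else 0)"
    using nib_fiber_size_sorted_swap_last[of \<rho> "Max B" b x]
    by (simp_all add: sorted_with_last_def \<rho>)
qed

lemma nib_fiber_size_snoc_unchanged_perm:
  assumes \<tau>: "\<tau> \<in> permutations_of_set B"
    and not_sorted: "\<tau> \<noteq> sorted_list_of_set B"
    and not_swapped: "\<tau> \<notin> sorted_with_last B ` (B - {Max B})"
  shows "nib_fiber_size (\<tau> @ [x]) = nib_fiber_size \<tau>"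
proof (rule nib_fiber_size_snoc_unchanged)
  have set_\<tau>: "set \<tau> = B" and "distinct \<tau>" using \<tau> by (auto simp: permutations_of_set_def)
  then have "finite B" by auto
  have sorted_iff: "sorted_wrt (<) \<tau> \<longleftrightarrow> \<tau> = sorted_list_of_set B"
    using sorted_list_of_set_eq_iff[OF \<open>finite B\<close>, of \<tau>] set_\<tau> by auto
  then show "\<not> sorted_wrt (<) \<tau>" using not_sorted by simp
  show "\<forall>\<rho> a b. \<tau> = \<rho> @ [a, b] \<longrightarrow> \<not> sorted_wrt (<) (\<rho> @ [a])"
  proof (intro allI impI notI)
    fix \<rho> a b assume split: "\<tau> = \<rho> @ [a, b]" and sorted: "sorted_wrt (<) (\<rho> @ [a])"
    have "a \<noteq> b" using \<open>distinct \<tau>\<close> split by simp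
    then consider "a < b" | "b < a" by (meson neq_iff)
    then show False
    proof cases
      case 1
      with sorted have "sorted_wrt (<) \<tau>" by (auto simp: split sorted_wrt_append)
      then show False using not_sorted sorted_iff by simp
    next
      case 2
      have "set (\<rho> @ [a]) = B - {b}" using split set_\<tau> \<open>distinct \<tau>\<close> by auto
      then have "sorted_list_of_set (B - {b}) = \<rho> @ [a]"
        using sorted \<open>finite B\<close> by (simp add: sorted_list_of_set_eq_iff)
      then have "\<tau> = sorted_with_last B b" by (simp add: sorted_with_last_def split)
      moreover have "b \<noteq> Max B"
        using 2 \<open>finite B\<close> set_\<tau> split by (metis Max_ge in_set_conv_decomp leD)
      moreover have "b \<in> B" using split set_\<tau> by auto
      ultimately show False using not_swapped by auto
    qed
  qed
qed

lemma sum_nib_fiber_size_snoc_increment: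
  assumes "finite B" "B \<noteq> {}" "x \<notin> B"
  defines "k \<equiv> real (card B)"
  shows "(\<Sum>\<tau>\<in>permutations_of_set B.
            real (nib_fiber_size (\<tau> @ [x]))^2 - real (nib_fiber_size \<tau>)^2) =
         (if Max B < x then (2 * k + 1) + (k - 1) * (2 * k - 3) else 1 - 2 * k)"
proof -
  define g where "g \<tau> = real (nib_fiber_size (\<tau> @ [x]))^2 - real (nib_fiber_size \<tau>)^2" for \<tau>
  define s where "s = sorted_list_of_set B"
  define D where "D = B - {Max B}"
  have "card B \<ge> 1" using assms(1,2) by (simp add: Suc_le_eq card_gt_0_iff)
  have g_s: "g s = (if Max B < x then 2 * k + 1 else 1 - 2 * k)"
    using nib_fiber_size_sorted_list_of_set[OF assms(1-3)] \<open>card B \<ge> 1\<close>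
    by (simp add: g_def s_def k_def of_nat_diff power2_eq_square algebra_simps)
  have g_swapped: "g (sorted_with_last B b) = (if Max B < x then 2 * k - 3 else 0)"
    if "b \<in> D" for b
  proof -
    have b: "b \<in> B" "b \<noteq> Max B" using that by (auto simp: D_def)
    then have "card {b, Max B} \<le> card B"
      using assms(1,2) by (intro card_mono) auto
    then have "card B \<ge> 2" using b by simp
    then show ?thesis
      using nib_fiber_size_sorted_with_last[OF assms(1) b]
      by (simp add: g_def k_def of_nat_diff power2_eq_square algebra_simps)
  qed
  have swapped_perms: "sorted_with_last B ` D \<subseteq> permutations_of_set B"
    using sorted_with_last_permutation[OF assms(1)] by (auto simp: D_def)
  have last_swapped: "last (sorted_with_last B b) = b" for b
    by (simp add: sorted_with_last_def)
  have "s \<in> permutations_of_set B" using assms(1) by (simp add: s_def permutations_of_set_def)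
  then have "(\<Sum>\<tau>\<in>permutations_of_set B. g \<tau>) = (\<Sum>\<tau>\<in>insert s (sorted_with_last B ` D). g \<tau>)"
    using swapped_perms nib_fiber_size_snoc_unchanged_perm[of _ B x]
    by (intro sum.mono_neutral_right) (auto simp: g_def s_def D_def)
  also have "\<dots> = g s + (\<Sum>b\<in>D. g (sorted_with_last B b))"
  proof -
    have "s \<notin> sorted_with_last B ` D"
      using last_swapped last_sorted_list_of_set[OF assms(1,2)] by (auto simp: s_def D_def)
    moreover have "inj_on (sorted_with_last B) D" by (metis inj_onI last_swapped)
    ultimately show ?thesis using assms(1) by (simp add: D_def sum.reindex)
  qed
  also have "\<dots> = g s + (k - 1) * (if Max B < x then 2 * k - 3 else 0)"
    using g_swapped Max_in[OF assms(1,2)] assms(1) \<open>card B \<ge> 1\<close>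
    by (simp add: D_def k_def of_nat_diff)
  finally show ?thesis unfolding g_def[symmetric] g_s by simp
qed

lemma permutations_of_set_snoc:
  assumes "A \<noteq> {}"
  shows "permutations_of_set A = (\<Union>x\<in>A. (\<lambda>\<tau>. \<tau> @ [x]) ` permutations_of_set (A - {x}))"
proof -
  have "permutations_of_set A = rev ` (\<Union>x\<in>A. Cons x ` permutations_of_set (A - {x}))"
    using permutations_of_set_nonempty[OF assms] rev_permutations_of_set[of A] by simp
  also have "\<dots> = (\<Union>x\<in>A. (\<lambda>\<tau>. \<tau> @ [x]) ` rev ` permutations_of_set (A - {x}))"
    by (simp add: image_UN image_image del: rev_permutations_of_set)
  finally show ?thesis by (simp only: rev_permutations_of_set)
qed

lemma sum_permutations_of_set_snoc:
  assumes "finite A" "A \<noteq> {}"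
  shows "(\<Sum>\<sigma>\<in>permutations_of_set A. f \<sigma>) =
         (\<Sum>x\<in>A. \<Sum>\<tau>\<in>permutations_of_set (A - {x}). f (\<tau> @ [x]))"
  unfolding permutations_of_set_snoc[OF assms(2)]
  by (subst sum.UNION_disjoint) (auto simp: assms(1) sum.reindex inj_on_def)

definition nib_fiber_square_sum :: "'a::linorder set \<Rightarrow> real" where
  "nib_fiber_square_sum A = (\<Sum>\<sigma>\<in>permutations_of_set A. real (nib_fiber_size \<sigma>)^2)"

lemma Max_remove_less_iff:
  assumes "finite A" "x \<in> A" "A - {x} \<noteq> {}"
  shows "Max (A - {x}) < x \<longleftrightarrow> x = Max A"
proof
  assume less: "Max (A - {x}) < x"
  have "y \<le> x" if "y \<in> A" for y
  proof (cases "y = x")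
    case False
    then have "y \<le> Max (A - {x})" using that assms(1) by (intro Max_ge) auto
    then show ?thesis using less by simp
  qed simp
  then show "x = Max A" using assms by (intro Max_eqI[symmetric]) auto
next
  assume x: "x = Max A"
  have "Max (A - {x}) \<in> A - {x}" using assms by (intro Max_in) auto
  then have "Max (A - {x}) \<le> Max A" "Max (A - {x}) \<noteq> x" using assms(1) by auto
  then show "Max (A - {x}) < x" using x by simp
qed

lemma nib_fiber_square_sum_rec:
  assumes "finite A" "card A \<ge> 2"
  defines "n \<equiv> real (card A)"
  shows "nib_fiber_square_sum A = (\<Sum>x\<in>A. nib_fiber_square_sum (A - {x})) + 6 - 2 * n"
proof -
  have "A \<noteq> {}" using assms(2) by auto
  define increment where "increment x =
    (if x = Max A then (2 * (n - 1) + 1) + (n - 2) * (2 * (n - 1) - 3) else 1 - 2 * (n - 1))" for x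
  have "(\<Sum>\<tau>\<in>permutations_of_set (A - {x}). real (nib_fiber_size (\<tau> @ [x]))^2) =
        nib_fiber_square_sum (A - {x}) + increment x" if "x \<in> A" for x
  proof -
    have card: "card (A - {x}) = card A - 1" using that assms(1) by simp
    then have "A - {x} \<noteq> {}" using assms(2) by (intro notI) simp
    moreover have card_real: "real (card (A - {x})) = n - 1"
      using card assms(2) by (simp add: n_def of_nat_diff)
    ultimately have "(\<Sum>\<tau>\<in>permutations_of_set (A - {x}).
        real (nib_fiber_size (\<tau> @ [x]))^2 - real (nib_fiber_size \<tau>)^2) = increment x"
      using sum_nib_fiber_size_snoc_increment[of "A - {x}" x] assms(1)
      unfolding card_real Max_remove_less_iff[OF assms(1) that \<open>A - {x} \<noteq> {}\<close>]
      by (simp add: increment_def algebra_simps)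
    then show ?thesis by (simp add: nib_fiber_square_sum_def sum_subtractf)
  qed
  then have "nib_fiber_square_sum A =
      (\<Sum>x\<in>A. nib_fiber_square_sum (A - {x})) + (\<Sum>x\<in>A. increment x)"
    unfolding nib_fiber_square_sum_def
    by (simp add: sum_permutations_of_set_snoc[OF assms(1) \<open>A \<noteq> {}\<close>] sum.distrib)
  also have "(\<Sum>x\<in>A. increment x) = increment (Max A) + (n - 1) * (1 - 2 * (n - 1))"
    using assms Max_in[OF assms(1) \<open>A \<noteq> {}\<close>]
    by (simp add: sum.remove[of A "Max A"] increment_def n_def of_nat_diff)
  also have "increment (Max A) + (n - 1) * (1 - 2 * (n - 1)) = 6 - 2 * n"
    by (simp add: increment_def algebra_simps)
  finally show ?thesis by simp
qed

definition exp_partial_sum :: "nat \<Rightarrow> real" where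
  "exp_partial_sum n = (\<Sum>i<n. 1 / fact i)"

lemma exp_partial_sum_Suc: "exp_partial_sum (Suc n) = exp_partial_sum n + 1 / fact n"
  by (simp add: exp_partial_sum_def)

lemma exp_partial_sum_tendsto: "exp_partial_sum \<longlonglongrightarrow> exp 1"
  using exp_converges[of "1::real"] unfolding sums_def exp_partial_sum_def[abs_def]
  by (simp add: divide_inverse)

lemma nib_fiber_square_sum_div_fact:
  assumes "finite A" "A \<noteq> {}"
  shows "nib_fiber_square_sum A / fact (card A) =
           6 * exp_partial_sum (Suc (card A)) - 2 * exp_partial_sum (card A) - 9"
  using assms
proof (induction A rule: finite_remove_induct)
  case (remove A)
  show ?case
  proof (cases "card A = 1")
    case True
    then obtain a where "A = {a}" by (auto simp: card_1_singleton_iff)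
    then show ?thesis by (simp add: nib_fiber_square_sum_def exp_partial_sum_def numeral_eq_Suc)
  next
    case False
    moreover have "card A > 0" using remove.hyps(1,2) by (simp add: card_gt_0_iff)
    ultimately obtain m where m: "card A = Suc (Suc m)"
      by (metis One_nat_def less_Suc_eq_0_disj nat.exhaust not_less0)
    define d where "d = 6 * exp_partial_sum (Suc (Suc m)) - 2 * exp_partial_sum (Suc m) - 9"
    define N where "N = real (card A)"
    have N_pos: "N > 0" using m by (simp add: N_def)
    have fact_A: "fact (card A) = N * fact (Suc m)" using m by (simp add: N_def)
    have sub: "nib_fiber_square_sum (A - {x}) = fact (Suc m) * d" if "x \<in> A" for x
    proof -
      have card: "card (A - {x}) = Suc m" using that m remove.hyps(1) by simp
      then have "A - {x} \<noteq> {}" by (metis card.empty nat.distinct(1))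
      then show ?thesis
        using remove.IH[OF that] card by (simp add: d_def divide_eq_eq mult.commute del: fact_Suc)
    qed
    have "nib_fiber_square_sum A = (\<Sum>x\<in>A. nib_fiber_square_sum (A - {x})) + 6 - 2 * N"
      using remove.hyps(1) m by (simp add: nib_fiber_square_sum_rec N_def)
    also have "\<dots> = N * fact (Suc m) * d + 6 - 2 * N"
      using sub by (simp add: N_def)
    finally have "nib_fiber_square_sum A / fact (card A)
        = (N * fact (Suc m) * d + 6 - 2 * N) / (N * fact (Suc m))"
      unfolding fact_A by simp
    also have "\<dots> = d + 6 / (N * fact (Suc m)) - 2 / fact (Suc m)"
      using N_pos by (simp add: field_simps del: fact_Suc)
    finally have "nib_fiber_square_sum A / fact (card A) = d + 6 / fact (card A) - 2 / fact (Suc m)"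
      unfolding fact_A .
    then show ?thesis using m by (simp add: d_def exp_partial_sum_Suc del: fact_Suc)
  qed
qed simp

lemma nib_fiber_in_Sym:
  assumes "y \<in> Sym n" shows "{x \<in> Sym n. nib x = y} = {x. nib x = y}"
proof -
  have "x \<in> Sym n" if "nib x = y" for x
    using assms set_nib[of x] distinct_nib[of x] that by (simp add: Sym_def permutations_of_set_def)
  then show ?thesis by blast
qed

lemma map_deg_nib_Sym: "map_deg nib (Sym n) (Sym n) = nib_fiber_square_sum {1..n} / fact n"
proof -
  have "card {x \<in> Sym n. nib x = y} = nib_fiber_size y" if "y \<in> Sym n" for y
  proof -
    have "distinct y" using that by (simp add: Sym_def permutations_of_set_def)
    then show ?thesis by (simp add: nib_fiber_in_Sym[OF that] card_nib_fiber)
  qed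
  then have "(\<Sum>y\<in>Sym n. real (card {x \<in> Sym n. nib x = y}) ^ 2) = nib_fiber_square_sum {1..n}"
    by (simp add: nib_fiber_square_sum_def Sym_def)
  then show ?thesis by (simp add: map_deg_def Sym_def)
qed

lemma map_deg_nib_Sym_exp_partial_sum:
  "n \<ge> 1 \<Longrightarrow> map_deg nib (Sym n) (Sym n) = 6 * exp_partial_sum (Suc n) - 2 * exp_partial_sum n - 9"
  using nib_fiber_square_sum_div_fact[of "{1..n}"] by (simp add: map_deg_nib_Sym)

lemma closed_form_eq_exp_partial_sum:
  assumes "n \<ge> 1"
  shows "((real n - 1) * (real n - 2) ^ 2 + real n ^ 2) / fact n
           + (\<Sum>k = 1..n - 2. real k * (real k ^ 3 - real k + 1) / fact (k + 2))
         = 6 * exp_partial_sum (Suc n) - 2 * exp_partial_sum n - 9"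
  using assms
proof (induction n rule: nat_induct_at_least)
  case base
  then show ?case by (simp add: exp_partial_sum_Suc exp_partial_sum_def)
next
  case (Suc n)
  define t where "t k = real k * (real k ^ 3 - real k + 1) / fact (k + 2)" for k :: nat
  define x where "x = real n"
  define F where "F = (fact n :: real)"
  have "x \<ge> 1" "F > 0" using Suc.hyps by (simp_all add: x_def F_def)
  have sum_step: "(\<Sum>k = 1..n - 1. t k) = (\<Sum>k = 1..n - 2. t k) + t (n - 1)"
  proof (cases "n = 1")
    case False
    then have "n - 1 = Suc (n - 2)" using Suc.hyps by simp
    then show ?thesis by simp
  qed (simp add: t_def)
  have "t (n - 1) = (x - 1) * ((x - 1) ^ 3 - (x - 1) + 1) / ((x + 1) * F)"
    using Suc.hyps by (simp add: t_def x_def F_def of_nat_diff algebra_simps)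
  moreover have "(x * (x - 1) ^ 2 + (x + 1) ^ 2) / ((x + 1) * F)
      + (x - 1) * ((x - 1) ^ 3 - (x - 1) + 1) / ((x + 1) * F)
      = ((x - 1) * (x - 2) ^ 2 + x ^ 2) / F + 6 / ((x + 1) * F) - 2 / F"
    (is "?a / ?D + ?b / ?D = ?c / F + 6 / ?D - 2 / F")
  proof -
    have to_D: "r / F = r * (x + 1) / ?D" for r using \<open>x \<ge> 1\<close> by simp
    have "?a / ?D + ?b / ?D = (?a + ?b) / ?D" by (simp add: add_divide_distrib)
    also have "?a + ?b = ?c * (x + 1) + 6 - 2 * (x + 1)"
      by (simp add: algebra_simps power2_eq_square power3_eq_cube)
    also have "(?c * (x + 1) + 6 - 2 * (x + 1)) / ?D = ?c * (x + 1) / ?D + 6 / ?D - 2 * (x + 1) / ?D"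
      by (simp only: add_divide_distrib diff_divide_distrib)
    finally show ?thesis by (simp only: to_D)
  qed
  ultimately show ?case
    using Suc.IH sum_step
    by (simp add: t_def x_def F_def exp_partial_sum_Suc algebra_simps)
qed

theorem mainTheorem11:
  shows "(\<forall>n::nat. n \<ge> 1 \<longrightarrow>
            map_deg nib (Sym n) (Sym n) =
              ((real n - 1) * (real n - 2) ^ 2 + real n ^ 2) / fact n
              + (\<Sum>k = 1..n - 2. real k * (real k ^ 3 - real k + 1) / fact (k + 2)))
       \<and> (\<lambda>n. map_deg nib (Sym n) (Sym n)) \<longlonglongrightarrow> 4 * exp 1 - 9"
proof
  show "\<forall>n::nat. n \<ge> 1 \<longrightarrow>
          map_deg nib (Sym n) (Sym n) =
            ((real n - 1) * (real n - 2) ^ 2 + real n ^ 2) / fact n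
            + (\<Sum>k = 1..n - 2. real k * (real k ^ 3 - real k + 1) / fact (k + 2))"
    by (intro allI impI) (simp only: map_deg_nib_Sym_exp_partial_sum closed_form_eq_exp_partial_sum)
  have "(\<lambda>n. 6 * exp_partial_sum (Suc n) - 2 * exp_partial_sum n - 9)
          \<longlonglongrightarrow> 6 * exp 1 - 2 * exp 1 - 9"
    by (intro tendsto_intros exp_partial_sum_tendsto LIMSEQ_Suc)
  moreover have "\<forall>\<^sub>F n in sequentially.
      6 * exp_partial_sum (Suc n) - 2 * exp_partial_sum n - 9 = map_deg nib (Sym n) (Sym n)"
    using eventually_ge_at_top[of 1] by eventually_elim (simp add: map_deg_nib_Sym_exp_partial_sum)
  ultimately show "(\<lambda>n. map_deg nib (Sym n) (Sym n)) \<longlonglongrightarrow> 4 * exp 1 - 9"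
    by (simp add: Lim_transform_eventually)
qed

end
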